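(* For every integer $q\ge1$ and every integer $k\ge0$ with $k\ne q+2$, \[ \frac{q^{2}}{8(2k-2q-3)(k-q-2)}S_{q}(k)+\frac{4kq-4q^{2}+2k-7q-4}{4(2k-2q-3)(k-q-2)}\, S_{q+1}(k)+S_{q+2}(k)=0, \] where $S_q(k)=\sum_{l_1,l_2\in\mathbb Z}H_q(l_1,l_2,k)$.
   Context: $(z)_k=z(z+1)\cdots(z+k-1)$ denotes the rising factorial. For integers $l_1,l_2,k$ and $q\ge1$, \[ H_q(l_{1},l_{2},k)=\frac{(-1)^{l_1+l_2}\left(-\frac{1}{2}\right)_{l_1} \left(-\frac{1}{2}\right)_{l_2} \left(\frac{1}{2}\right)_{q-l_{1}} \left(\frac{1}{2}\right)_{q-l_{2}}}{(2q-l_{1}-l_{2}-k)!\,(l_{2}-l_{1}+k)!\,(l_{1}-l_{2}+k)!\,(l_{1}+l_{2}-k)!}, \] where Pochhammer symbols and factorials are expressed via the Gamma function, with $1/\Gamma$ vanishing at non-positive integers (so only finitely many terms are non-zero). *)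

theory Defs
  imports "HOL-Analysis.Analysis"
begin

definition poch_int :: "real \<Rightarrow> int \<Rightarrow> real" where
  "poch_int a n = Gamma (a + of_int n) / Gamma a"

text \<open>Reciprocal factorial 1/n! = 1/Gamma(n+1), vanishing for negative integers n.\<close>
definition rfact_int :: "int \<Rightarrow> real" where
  "rfact_int n = rGamma (of_int n + 1)"

definition H :: "int \<Rightarrow> int \<Rightarrow> int \<Rightarrow> int \<Rightarrow> real" where
  "H q l1 l2 k =
     (-1) powi (l1 + l2) * poch_int (-1/2) l1 * poch_int (-1/2) l2
       * poch_int (1/2) (q - l1) * poch_int (1/2) (q - l2)
       * rfact_int (2*q - l1 - l2 - k) * rfact_int (l2 - l1 + k)
       * rfact_int (l1 - l2 + k) * rfact_int (l1 + l2 - k)"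

definition S :: "int \<Rightarrow> int \<Rightarrow> real" where
  "S q k = (\<Sum>\<^sub>\<infinity>(l1, l2) \<in> (UNIV :: (int \<times> int) set). H q l1 l2 k)"

end

theory Submission
  imports Defs
begin

text \<open>Creative telescoping. Let \<open>L(l\<^sub>1, l\<^sub>2)\<close> be the summand of the recurrence, the given
  combination of \<open>H\<^sub>q, H\<^sub>q\<^sub>+\<^sub>1, H\<^sub>q\<^sub>+\<^sub>2\<close> at \<open>(l\<^sub>1, l\<^sub>2)\<close>. By the functional equations of \<open>\<Gamma>\<close> and
  \<open>1/\<Gamma>\<close> these are polynomial multiples of one hypergeometric base term. For \<open>k \<noteq> 0\<close> there are
  rational multiples \<open>G\<^sub>1, G\<^sub>2\<close> of hypergeometric terms with
  \<open>L(l\<^sub>1, l\<^sub>2) = G\<^sub>1(l\<^sub>1 + 1, l\<^sub>2) - G\<^sub>1(l\<^sub>1, l\<^sub>2) + G\<^sub>2(l\<^sub>1, l\<^sub>2 + 1) - G\<^sub>2(l\<^sub>1, l\<^sub>2)\<close>;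
  divided by the base term, this is a polynomial identity. Everything is finitely supported, so
  summing over \<open>\<int>\<^sup>2\<close> makes the right-hand side vanish. For \<open>k = 0\<close> the summand lives on the
  diagonal \<open>l\<^sub>1 = l\<^sub>2\<close>, where a single certificate telescopes along the diagonal.\<close>

lemma half_notin_Ints: "(1/2 :: real) \<notin> \<int>" "(-1/2 :: real) \<notin> \<int>"
proof -
  have "c \<notin> \<int>" if "2 * c = 1 \<or> 2 * c = -1" for c :: real
  proof
    assume "c \<in> \<int>"
    then obtain m where "c = of_int m" by (elim Ints_cases)
    with that have "2 * m = 1 \<or> 2 * m = -1" by linarith
    then show False by presburger
  qed
  then show "(1/2 :: real) \<notin> \<int>" "(-1/2 :: real) \<notin> \<int>" by auto
qed

lemma poch_int_shift:
  fixes a :: real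
  assumes "a \<notin> \<int>" and "m = n + int j" and "r = pochhammer (a + of_int n) j"
  shows "poch_int a m = r * poch_int a n"
proof -
  have "a + of_int n \<notin> \<int>\<^sub>\<le>\<^sub>0"
    using assms(1) nonpos_Ints_subset_Ints by (metis Ints_diff Ints_of_int add_diff_cancel_right' subsetD)
  then show ?thesis
    using assms(2,3) by (simp add: poch_int_def pochhammer_Gamma Gamma_eq_zero_iff add.assoc)
qed

lemma poch_int_minus_half_shift:
  "poch_int (-1/2) n = of_int (2 * n - 3) / 2 * poch_int (-1/2) (n - 1)"
  by (rule poch_int_shift[where j = 1]) (simp_all add: half_notin_Ints field_simps)

lemma rfact_int_shift:
  assumes "m = n + int j" and "r = pochhammer (of_int n + 1) j"
  shows "rfact_int n = r * rfact_int m"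
  using pochhammer_rGamma[of "of_int n + 1 :: real" j] assms by (simp add: rfact_int_def ac_simps)

lemma rfact_int_eq_0:
  assumes "n < 0"
  shows "rfact_int n = 0"
proof -
  have "(of_int (n + 1) :: real) \<in> \<int>\<^sub>\<le>\<^sub>0" using assms by (intro nonpos_Ints_of_int) simp
  then show ?thesis unfolding rfact_int_def by (intro rGamma_nonpos_Int) simp
qed

lemma rfact_int_nonzero_imp_nonneg: "rfact_int n \<noteq> 0 \<Longrightarrow> 0 \<le> n"
  using rfact_int_eq_0 by force

section \<open>Finitely supported sums\<close>

lemma summable_on_finite_support:
  fixes f :: "'a \<Rightarrow> 'b::{topological_comm_monoid_add, t2_space}"
  assumes "finite {x. f x \<noteq> 0}"
  shows "f summable_on UNIV"
proof -
  have "f summable_on {x. f x \<noteq> 0}" using assms by simp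
  then show ?thesis by (subst summable_on_cong_neutral[where T = "{x. f x \<noteq> 0}"]) auto
qed

lemma infsum_reindex_diff_eq_0:
  fixes g :: "'a \<Rightarrow> 'b::{topological_ab_group_add, t2_space}"
  assumes "finite {x. g x \<noteq> 0}" and "bij s"
  shows "(\<lambda>x. g (s x) - g x) summable_on UNIV" and "(\<Sum>\<^sub>\<infinity>x. g (s x) - g x) = 0"
proof -
  have s: "bij_betw s UNIV UNIV" using assms(2) by (simp add: bij_def bij_betw_def)
  have g: "g summable_on UNIV" using assms(1) by (rule summable_on_finite_support)
  then have gs: "(\<lambda>x. g (s x)) summable_on UNIV" by (simp add: summable_on_reindex_bij_betw[OF s])
  have mg: "(\<lambda>x. - g x) summable_on UNIV" using g by (simp add: summable_on_uminus)
  show "(\<lambda>x. g (s x) - g x) summable_on UNIV"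
    using summable_on_add[OF gs mg] by simp
  have "(\<Sum>\<^sub>\<infinity>x. g (s x) - g x) = (\<Sum>\<^sub>\<infinity>x. g (s x)) + (\<Sum>\<^sub>\<infinity>x. - g x)"
    using infsum_add[OF gs mg] by simp
  also have "\<dots> = 0"
    by (simp add: infsum_reindex_bij_betw[OF s] infsum_uminus)
  finally show "(\<Sum>\<^sub>\<infinity>x. g (s x) - g x) = 0" .
qed

lemma infsum_telescoping_eq_0:
  fixes f g1 g2 :: "'a \<Rightarrow> 'b::{topological_ab_group_add, t2_space}"
  assumes "finite {x. g1 x \<noteq> 0}" "bij s1" "finite {x. g2 x \<noteq> 0}" "bij s2"
    and "\<And>x. f x = (g1 (s1 x) - g1 x) + (g2 (s2 x) - g2 x)"
  shows "(\<Sum>\<^sub>\<infinity>x. f x) = 0"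
  using infsum_add[OF infsum_reindex_diff_eq_0(1)[OF assms(1,2)] infsum_reindex_diff_eq_0(1)[OF assms(3,4)]]
    infsum_reindex_diff_eq_0(2)[OF assms(1,2)] infsum_reindex_diff_eq_0(2)[OF assms(3,4)] assms(5)
  by simp

lemma infsum_linear_combination3:
  fixes f g h :: "'a \<Rightarrow> 'b::{topological_semigroup_mult, semiring_0, t2_space, topological_comm_monoid_add}"
  assumes "f summable_on A" and "g summable_on A" and "h summable_on A"
  shows "(\<Sum>\<^sub>\<infinity>x\<in>A. a * f x + b * g x + h x) = a * (\<Sum>\<^sub>\<infinity>x\<in>A. f x) + b * (\<Sum>\<^sub>\<infinity>x\<in>A. g x) + (\<Sum>\<^sub>\<infinity>x\<in>A. h x)"
proof -
  have "(\<lambda>x. a * f x) summable_on A" and "(\<lambda>x. b * g x) summable_on A"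
    using assms(1,2) by (auto intro: summable_on_cmult_right)
  then show ?thesis
    using assms by (simp add: infsum_add summable_on_add infsum_cmult_right)
qed

lemma bij_shift_int_pair:
  fixes i j :: int
  shows "bij (\<lambda>(a, b). (a + i, b + j))"
  by (rule bij_betw_byWitness[where f' = "\<lambda>(a, b). (a - i, b - j)"]) auto

lemma finite_support_int_pair:
  fixes f :: "int \<times> int \<Rightarrow> 'b::zero"
  assumes "\<And>a b. f (a, b) \<noteq> 0 \<Longrightarrow> s\<^sub>0 \<le> a + b \<and> a + b \<le> s\<^sub>1 \<and> d\<^sub>0 \<le> a - b \<and> a - b \<le> d\<^sub>1"
  shows "finite {p. f p \<noteq> 0}"
proof (rule finite_subset)
  define M where "M = \<bar>s\<^sub>0\<bar> + \<bar>s\<^sub>1\<bar> + \<bar>d\<^sub>0\<bar> + \<bar>d\<^sub>1\<bar>"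
  show "{p. f p \<noteq> 0} \<subseteq> {-M..M} \<times> {-M..M}"
    using assms unfolding M_def by fastforce
qed simp

section \<open>All terms as multiples of one base term\<close>

definition H_base :: "int \<Rightarrow> int \<Rightarrow> int \<Rightarrow> int \<Rightarrow> real" where
  "H_base q k l1 l2 =
     (-1) powi (l1 + l2) * poch_int (-1/2) (l1 - 1) * poch_int (-1/2) (l2 - 1)
       * poch_int (1/2) (q - l1 - 1) * poch_int (1/2) (q - l2 - 1)
       * rfact_int (2 * q - l1 - l2 - k + 4) * rfact_int (l2 - l1 + k)
       * rfact_int (l1 - l2 + k) * rfact_int (l1 + l2 - k)"

lemma H_base_swap: "H_base q k l2 l1 = H_base q k l1 l2"
proof -
  have "2 * q - l2 - l1 - k + 4 = 2 * q - l1 - l2 - k + 4" and "l2 + l1 - k = l1 + l2 - k" by simp_all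
  then show ?thesis unfolding H_base_def by (simp only:) (simp add: ac_simps)
qed

definition H_ratio0 :: "int \<Rightarrow> int \<Rightarrow> int \<Rightarrow> int \<Rightarrow> int" where
  "H_ratio0 q k l1 l2 = (2 * l1 - 3) * (2 * l2 - 3) * (2 * q - 2 * l1 - 1) * (2 * q - 2 * l2 - 1)
     * ((2 * q - l1 - l2 - k + 1) * (2 * q - l1 - l2 - k + 2) * (2 * q - l1 - l2 - k + 3)
        * (2 * q - l1 - l2 - k + 4))"

definition H_ratio1 :: "int \<Rightarrow> int \<Rightarrow> int \<Rightarrow> int \<Rightarrow> int" where
  "H_ratio1 q k l1 l2 = (2 * l1 - 3) * (2 * l2 - 3)
     * ((2 * q - 2 * l1 - 1) * (2 * q - 2 * l1 + 1)) * ((2 * q - 2 * l2 - 1) * (2 * q - 2 * l2 + 1))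
     * ((2 * q - l1 - l2 - k + 3) * (2 * q - l1 - l2 - k + 4))"

definition H_ratio2 :: "int \<Rightarrow> int \<Rightarrow> int \<Rightarrow> int \<Rightarrow> int" where
  "H_ratio2 q k l1 l2 = (2 * l1 - 3) * (2 * l2 - 3)
     * ((2 * q - 2 * l1 - 1) * (2 * q - 2 * l1 + 1) * (2 * q - 2 * l1 + 3))
     * ((2 * q - 2 * l2 - 1) * (2 * q - 2 * l2 + 1) * (2 * q - 2 * l2 + 3))"

lemma H_eq_H_base: "H q l1 l2 k = of_int (H_ratio0 q k l1 l2) / 16 * H_base q k l1 l2"
proof -
  have poch: "poch_int (1/2) (q - l1) = of_int (2 * q - 2 * l1 - 1) / 2 * poch_int (1/2) (q - l1 - 1)"
       "poch_int (1/2) (q - l2) = of_int (2 * q - 2 * l2 - 1) / 2 * poch_int (1/2) (q - l2 - 1)"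
    by (rule poch_int_shift[where j = 1]; simp add: half_notin_Ints field_simps)+
  have rfact: "rfact_int (2 * q - l1 - l2 - k) = of_int (2 * q - l1 - l2 - k + 1)
      * of_int (2 * q - l1 - l2 - k + 2) * of_int (2 * q - l1 - l2 - k + 3)
      * of_int (2 * q - l1 - l2 - k + 4) * rfact_int (2 * q - l1 - l2 - k + 4)"
    by (rule rfact_int_shift[where j = 4]) (simp_all add: eval_nat_numeral pochhammer_Suc algebra_simps)
  show ?thesis
    unfolding H_def H_base_def poch rfact poch_int_minus_half_shift[of l1] poch_int_minus_half_shift[of l2]
    by (simp add: H_ratio0_def mult_ac)
qed

lemma H_succ_eq_H_base: "H (q + 1) l1 l2 k = of_int (H_ratio1 q k l1 l2) / 64 * H_base q k l1 l2"
proof -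
  have poch: "poch_int (1/2) (q + 1 - l1) = of_int (2 * q - 2 * l1 - 1) / 2 * (of_int (2 * q - 2 * l1 + 1) / 2)
          * poch_int (1/2) (q - l1 - 1)"
       "poch_int (1/2) (q + 1 - l2) = of_int (2 * q - 2 * l2 - 1) / 2 * (of_int (2 * q - 2 * l2 + 1) / 2)
          * poch_int (1/2) (q - l2 - 1)"
    by (rule poch_int_shift[where j = 2];
        simp add: half_notin_Ints eval_nat_numeral pochhammer_Suc field_simps)+
  have rfact: "rfact_int (2 * (q + 1) - l1 - l2 - k) = of_int (2 * q - l1 - l2 - k + 3)
      * of_int (2 * q - l1 - l2 - k + 4) * rfact_int (2 * q - l1 - l2 - k + 4)"
    by (rule rfact_int_shift[where j = 2]) (simp_all add: eval_nat_numeral pochhammer_Suc algebra_simps)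
  show ?thesis
    unfolding H_def H_base_def poch rfact poch_int_minus_half_shift[of l1] poch_int_minus_half_shift[of l2]
    by (simp add: H_ratio1_def mult_ac)
qed

lemma H_succ2_eq_H_base: "H (q + 2) l1 l2 k = of_int (H_ratio2 q k l1 l2) / 256 * H_base q k l1 l2"
proof -
  have poch: "poch_int (1/2) (q + 2 - l1) = of_int (2 * q - 2 * l1 - 1) / 2
          * (of_int (2 * q - 2 * l1 + 1) / 2) * (of_int (2 * q - 2 * l1 + 3) / 2) * poch_int (1/2) (q - l1 - 1)"
       "poch_int (1/2) (q + 2 - l2) = of_int (2 * q - 2 * l2 - 1) / 2
          * (of_int (2 * q - 2 * l2 + 1) / 2) * (of_int (2 * q - 2 * l2 + 3) / 2) * poch_int (1/2) (q - l2 - 1)"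
    by (rule poch_int_shift[where j = 3];
        simp add: half_notin_Ints eval_nat_numeral pochhammer_Suc field_simps)+
  have args: "2 * (q + 2) - l1 - l2 - k = 2 * q - l1 - l2 - k + 4" by simp
  show ?thesis
    unfolding H_def H_base_def poch args poch_int_minus_half_shift[of l1] poch_int_minus_half_shift[of l2]
    by (simp add: H_ratio2_def mult_ac)
qed

definition cert_term :: "int \<Rightarrow> int \<Rightarrow> int \<Rightarrow> int \<Rightarrow> real" where
  "cert_term q k l1 l2 =
     (-1) powi (l1 + l2) * poch_int (-1/2) (l1 - 1) * poch_int (-1/2) (l2 - 1)
       * poch_int (1/2) (q - l1) * poch_int (1/2) (q - l2 - 1)
       * rfact_int (2 * q - l1 - l2 - k + 4) * rfact_int (l2 - l1 + k)
       * rfact_int (l1 - l2 + k - 1) * rfact_int (l1 + l2 - k - 1)"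

definition cert_ratio :: "int \<Rightarrow> int \<Rightarrow> int \<Rightarrow> int \<Rightarrow> int" where
  "cert_ratio q k l1 l2 = (2 * q - 2 * l1 - 1) * (l1 - l2 + k) * (l1 + l2 - k)"

definition cert_ratio_succ :: "int \<Rightarrow> int \<Rightarrow> int \<Rightarrow> int \<Rightarrow> int" where
  "cert_ratio_succ q k l1 l2 = - ((2 * l1 - 3) * (2 * q - l1 - l2 - k + 4) * (l2 - l1 + k))"

lemma cert_term_eq_H_base: "cert_term q k l1 l2 = of_int (cert_ratio q k l1 l2) / 2 * H_base q k l1 l2"
proof -
  have poch: "poch_int (1/2) (q - l1) = of_int (2 * q - 2 * l1 - 1) / 2 * poch_int (1/2) (q - l1 - 1)"
    by (rule poch_int_shift[where j = 1]) (simp_all add: half_notin_Ints field_simps)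
  have rfact: "rfact_int (l1 - l2 + k - 1) = of_int (l1 - l2 + k) * rfact_int (l1 - l2 + k)"
       "rfact_int (l1 + l2 - k - 1) = of_int (l1 + l2 - k) * rfact_int (l1 + l2 - k)"
    by (rule rfact_int_shift[where j = 1]; simp)+
  show ?thesis
    unfolding cert_term_def H_base_def poch rfact by (simp add: cert_ratio_def mult_ac)
qed

lemma cert_term_succ_eq_H_base:
  "cert_term q k (l1 + 1) l2 = of_int (cert_ratio_succ q k l1 l2) / 2 * H_base q k l1 l2"
proof -
  have sign: "(-1 :: real) powi (l1 + 1 + l2) = - ((-1) powi (l1 + l2))"
    by (simp add: power_int_add algebra_simps)
  have poch: "poch_int (-1/2) (l1 + 1 - 1) = of_int (2 * l1 - 3) / 2 * poch_int (-1/2) (l1 - 1)"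
    using poch_int_minus_half_shift[of l1] by simp
  have rfact: "rfact_int (2 * q - (l1 + 1) - l2 - k + 4)
         = of_int (2 * q - l1 - l2 - k + 4) * rfact_int (2 * q - l1 - l2 - k + 4)"
       "rfact_int (l2 - (l1 + 1) + k) = of_int (l2 - l1 + k) * rfact_int (l2 - l1 + k)"
    by (rule rfact_int_shift[where j = 1]; simp)+
  have args: "q - (l1 + 1) = q - l1 - 1" "l1 + 1 - l2 + k - 1 = l1 - l2 + k" "l1 + 1 + l2 - k - 1 = l1 + l2 - k"
    by simp_all
  show ?thesis
    unfolding cert_term_def H_base_def sign poch rfact args by (simp add: cert_ratio_succ_def mult_ac)
qed

text \<open>Two steps below \<open>H_base q 0 l l\<close> in the first reciprocal factorial, so that
  \<open>diag_cert_term q (l - 1)\<close> is a polynomial multiple of it as well.\<close>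

definition H_diag_base :: "int \<Rightarrow> int \<Rightarrow> real" where
  "H_diag_base q l =
     poch_int (-1/2) (l - 1) * poch_int (-1/2) (l - 1) * poch_int (1/2) (q - l - 1) * poch_int (1/2) (q - l - 1)
       * rfact_int (2 * q - 2 * l + 6) * rfact_int (2 * l)"

lemma H_base_diag: "H_base q 0 l l = of_int ((2 * q - 2 * l + 5) * (2 * q - 2 * l + 6)) * H_diag_base q l"
proof -
  have sign: "(-1 :: real) powi (l + l) = 1"
    by (simp add: power_int_add power_int_mult_distrib flip: mult_2)
  have rfact: "rfact_int (2 * q - l - l - 0 + 4)
      = of_int (2 * q - 2 * l + 5) * of_int (2 * q - 2 * l + 6) * rfact_int (2 * q - 2 * l + 6)"
    by (rule rfact_int_shift[where j = 2]) (simp_all add: eval_nat_numeral pochhammer_Suc algebra_simps)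
  have args: "l - l + 0 = 0" "l + l - 0 = 2 * l" by simp_all
  show ?thesis
    unfolding H_base_def H_diag_base_def sign rfact args by (simp add: rfact_int_def mult_ac)
qed

definition diag_cert_term :: "int \<Rightarrow> int \<Rightarrow> real" where
  "diag_cert_term q m =
     poch_int (-1/2) m * poch_int (-1/2) m * poch_int (1/2) (q - m) * poch_int (1/2) (q + 2 - m)
       * rfact_int (2 * q + 4 - 2 * m) * rfact_int (2 * m)"

definition diag_ratio :: "int \<Rightarrow> int \<Rightarrow> int" where
  "diag_ratio q l = (2 * l - 3) * (2 * l - 3) * (2 * q - 2 * l - 1)
     * ((2 * q - 2 * l - 1) * (2 * q - 2 * l + 1) * (2 * q - 2 * l + 3))
     * ((2 * q - 2 * l + 5) * (2 * q - 2 * l + 6))"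

definition diag_ratio_pred :: "int \<Rightarrow> int \<Rightarrow> int" where
  "diag_ratio_pred q l = ((2 * q - 2 * l - 1) * (2 * q - 2 * l + 1))
     * ((2 * q - 2 * l - 1) * (2 * q - 2 * l + 1) * (2 * q - 2 * l + 3) * (2 * q - 2 * l + 5))
     * ((2 * l - 1) * (2 * l))"

lemma diag_cert_term_eq_H_diag_base:
  "diag_cert_term q l = of_int (diag_ratio q l) / 64 * H_diag_base q l"
proof -
  have poch: "poch_int (1/2) (q - l) = of_int (2 * q - 2 * l - 1) / 2 * poch_int (1/2) (q - l - 1)"
    by (rule poch_int_shift[where j = 1]) (simp_all add: half_notin_Ints field_simps)
  have poch2: "poch_int (1/2) (q + 2 - l) = of_int (2 * q - 2 * l - 1) / 2
      * (of_int (2 * q - 2 * l + 1) / 2) * (of_int (2 * q - 2 * l + 3) / 2) * poch_int (1/2) (q - l - 1)"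
    by (rule poch_int_shift[where j = 3])
       (simp_all add: half_notin_Ints eval_nat_numeral pochhammer_Suc field_simps)
  have rfact: "rfact_int (2 * q + 4 - 2 * l)
      = of_int (2 * q - 2 * l + 5) * of_int (2 * q - 2 * l + 6) * rfact_int (2 * q - 2 * l + 6)"
    by (rule rfact_int_shift[where j = 2]) (simp_all add: eval_nat_numeral pochhammer_Suc algebra_simps)
  show ?thesis
    unfolding diag_cert_term_def H_diag_base_def poch poch2 rfact poch_int_minus_half_shift[of l]
    by (simp add: diag_ratio_def mult_ac)
qed

lemma diag_cert_term_pred_eq_H_diag_base:
  "diag_cert_term q (l - 1) = of_int (diag_ratio_pred q l) / 64 * H_diag_base q l"
proof -
  have poch: "poch_int (1/2) (q - (l - 1)) = of_int (2 * q - 2 * l - 1) / 2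
      * (of_int (2 * q - 2 * l + 1) / 2) * poch_int (1/2) (q - l - 1)"
    by (rule poch_int_shift[where j = 2])
       (simp_all add: half_notin_Ints eval_nat_numeral pochhammer_Suc field_simps)
  have poch2: "poch_int (1/2) (q + 2 - (l - 1)) = of_int (2 * q - 2 * l - 1) / 2
      * (of_int (2 * q - 2 * l + 1) / 2) * (of_int (2 * q - 2 * l + 3) / 2) * (of_int (2 * q - 2 * l + 5) / 2)
      * poch_int (1/2) (q - l - 1)"
    by (rule poch_int_shift[where j = 4])
       (simp_all add: half_notin_Ints eval_nat_numeral pochhammer_Suc field_simps)
  have rfact: "rfact_int (2 * (l - 1)) = of_int (2 * l - 1) * of_int (2 * l) * rfact_int (2 * l)"
    by (rule rfact_int_shift[where j = 2]) (simp_all add: eval_nat_numeral pochhammer_Suc algebra_simps)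
  have args: "2 * q + 4 - 2 * (l - 1) = 2 * q - 2 * l + 6" by simp
  show ?thesis
    unfolding diag_cert_term_def H_diag_base_def poch poch2 rfact args
    by (simp add: diag_ratio_pred_def mult_ac)
qed

section \<open>The certificate for \<open>k \<noteq> 0\<close>\<close>

text \<open>The certificate polynomials were found by computer algebra (creative telescoping);
  here they are only checked.\<close>

definition cert_poly1 :: "int \<Rightarrow> int \<Rightarrow> int \<Rightarrow> int \<Rightarrow> int" where
  "cert_poly1 q k x y =
     936 - 4080 * y + 1728 * y^2 + 14208 * y^3 - 21888 * y^4 + 8448 * y^5 - 720 * x + 2784 * x * y
     - 384 * x * y^2 - 9984 * x * y^3 + 13056 * x * y^4 - 4608 * x * y^5 - 5952 * k + 24128 * k * y
     - 4992 * k * y^2 - 86272 * k * y^3 + 115200 * k * y^4 - 40960 * k * y^5 + 5760 * k * x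
     - 24192 * k * x * y - 256 * k * x * y^2 + 90624 * k * x * y^3 - 91136 * k * x * y^4
     + 24576 * k * x * y^5 + 2304 * k * x^2 + 1536 * k * x^2 * y - 11264 * k * x^2 * y^2
     - 6144 * k * x^2 * y^3 + 8192 * k * x^2 * y^4 - 1536 * k * x^3 + 1024 * k * x^3 * y
     + 6144 * k * x^3 * y^2 - 4096 * k * x^3 * y^3 + 12096 * k^2 - 42624 * k^2 * y + 768 * k^2 * y^2
     + 153088 * k^2 * y^3 - 196608 * k^2 * y^4 + 69632 * k^2 * y^5 - 18816 * k^2 * x
     + 50944 * k^2 * x * y + 32768 * k^2 * x * y^2 - 192512 * k^2 * x * y^3 + 169984 * k^2 * x * y^4
     - 45056 * k^2 * x * y^5 + 1920 * k^2 * x^2 - 5888 * k^2 * x^2 * y - 4608 * k^2 * x^2 * y^2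
     + 23552 * k^2 * x^2 * y^3 - 12288 * k^2 * x^2 * y^4 + 768 * k^2 * x^3 - 512 * k^2 * x^3 * y
     - 3072 * k^2 * x^3 * y^2 + 2048 * k^2 * x^3 * y^3 - 5376 * k^3 + 24320 * k^3 * y
     - 10752 * k^3 * y^2 - 84992 * k^3 * y^3 + 129024 * k^3 * y^4 - 49152 * k^3 * y^5
     + 13824 * k^3 * x - 35328 * k^3 * x * y - 25600 * k^3 * x * y^2 + 133120 * k^3 * x * y^3
     - 118784 * k^3 * x * y^4 + 32768 * k^3 * x * y^5 - 1536 * k^3 * x^2 + 2560 * k^3 * x^2 * y
     + 5120 * k^3 * x^2 * y^2 - 10240 * k^3 * x^2 * y^3 + 4096 * k^3 * x^2 * y^4 - 2304 * k^4
     + 14848 * k^4 * y^2 - 3072 * k^4 * y^3 - 22528 * k^4 * y^4 + 12288 * k^4 * y^5 - 3072 * k^4 * x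
     + 8192 * k^4 * x * y + 5120 * k^4 * x * y^2 - 30720 * k^4 * x * y^3 + 28672 * k^4 * x * y^4
     - 8192 * k^4 * x * y^5 + 1536 * k^5 - 2560 * k^5 * y - 5120 * k^5 * y^2 + 10240 * k^5 * y^3
     - 4096 * k^5 * y^4 + 2310 * q - 244 * q * y - 33744 * q * y^2 + 72608 * q * y^3
     - 49824 * q * y^4 + 8384 * q * y^5 + 1536 * q * y^6 - 2364 * q * x + 616 * q * x * y
     + 26080 * q * x * y^2 - 49984 * q * x * y^3 + 31808 * q * x * y^4 - 6528 * q * x * y^5
     - 9312 * q * k - 3344 * q * k * y + 186368 * q * k * y^2 - 397248 * q * k * y^3
     + 258944 * q * k * y^4 - 40960 * q * k * y^5 - 5632 * q * k * y^6 + 2592 * q * k * x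
     + 7776 * q * k * x * y - 168000 * q * k * x * y^2 + 327808 * q * k * x * y^3
     - 192768 * q * k * x * y^4 + 30720 * q * k * x * y^5 + 12192 * q * k * x^2
     + 13952 * q * k * x^2 * y - 38912 * q * k * x^2 * y^2 + 1536 * q * k * x^2 * y^3
     + 9728 * q * k * x^2 * y^4 - 3840 * q * k * x^3 - 9728 * q * k * x^3 * y
     + 23552 * q * k * x^3 * y^2 - 10240 * q * k * x^3 * y^3 + 14928 * q * k^2 + 34400 * q * k^2 * y
     - 338880 * q * k^2 * y^2 + 627072 * q * k^2 * y^3 - 388096 * q * k^2 * y^4
     + 62464 * q * k^2 * y^5 + 6144 * q * k^2 * y^6 - 17376 * q * k^2 * x - 89408 * q * k^2 * x * y
     + 428288 * q * k^2 * x * y^2 - 573952 * q * k^2 * x * y^3 + 285184 * q * k^2 * x * y^4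
     - 41984 * q * k^2 * x * y^5 - 6624 * q * k^2 * x^2 + 17472 * q * k^2 * x^2 * y
     - 19072 * q * k^2 * x^2 * y^2 + 16128 * q * k^2 * x^2 * y^3 - 6144 * q * k^2 * x^2 * y^4
     + 2112 * q * k^2 * x^3 + 4736 * q * k^2 * x^3 * y - 12544 * q * k^2 * x^3 * y^2
     + 5632 * q * k^2 * x^3 * y^3 + 864 * q * k^3 - 24768 * q * k^3 * y + 165120 * q * k^3 * y^2
     - 322816 * q * k^3 * y^3 + 202752 * q * k^3 * y^4 - 32768 * q * k^3 * y^5 - 2048 * q * k^3 * y^6
     + 10368 * q * k^3 * x + 82944 * q * k^3 * x * y - 304128 * q * k^3 * x * y^2
     + 344064 * q * k^3 * x * y^3 - 145408 * q * k^3 * x * y^4 + 16384 * q * k^3 * x * y^5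
     + 384 * q * k^3 * x^2 - 12544 * q * k^3 * x^2 * y + 18944 * q * k^3 * x^2 * y^2
     - 7168 * q * k^3 * x^2 * y^3 - 6336 * q * k^4 - 11904 * q * k^4 * y + 25344 * q * k^4 * y^2
     + 17920 * q * k^4 * y^3 - 24576 * q * k^4 * y^4 + 4096 * q * k^4 * y^5 - 768 * q * k^4 * x
     - 22528 * q * k^4 * x * y + 67584 * q * k^4 * x * y^2 - 65536 * q * k^4 * x * y^3
     + 20480 * q * k^4 * x * y^4 + 1152 * q * k^5 + 10752 * q * k^5 * y - 24576 * q * k^5 * y^2
     + 14336 * q * k^5 * y^3 - 2048 * q * k^5 * y^4 - 1413 * q^2 + 29010 * q^2 * y
     - 89008 * q^2 * y^2 + 96496 * q^2 * y^3 - 33424 * q^2 * y^4 - 2272 * q^2 * y^5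
     + 1664 * q^2 * y^6 + 30 * q^2 * x - 24212 * q^2 * x * y + 71568 * q^2 * x * y^2
     - 72288 * q^2 * x * y^3 + 28640 * q^2 * x * y^4 - 3392 * q^2 * x * y^5 + 15156 * q^2 * k
     - 152856 * q^2 * k * y + 458024 * q^2 * k * y^2 - 504032 * q^2 * k * y^3
     + 183680 * q^2 * k * y^4 + 1536 * q^2 * k * y^5 - 4992 * q^2 * k * y^6 - 13536 * q^2 * k * x
     + 123744 * q^2 * k * x * y - 364864 * q^2 * k * x * y^2 + 382336 * q^2 * k * x * y^3
     - 146688 * q^2 * k * x * y^4 + 13312 * q^2 * k * x * y^5 - 10296 * q^2 * k * x^2
     + 63360 * q^2 * k * x^2 * y - 64448 * q^2 * k * x^2 * y^2 + 12288 * q^2 * k * x^2 * y^3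
     + 3712 * q^2 * k * x^2 * y^4 + 8544 * q^2 * k * x^3 - 26432 * q^2 * k * x^3 * y
     + 24192 * q^2 * k * x^3 * y^2 - 6912 * q^2 * k * x^3 * y^3 - 576 * q^2 * k * x^4
     - 768 * q^2 * k * x^4 * y + 768 * q^2 * k * x^4 * y^2 - 33696 * q^2 * k^2
     + 281376 * q^2 * k^2 * y - 691008 * q^2 * k^2 * y^2 + 668736 * q^2 * k^2 * y^3
     - 229632 * q^2 * k^2 * y^4 + 4864 * q^2 * k^2 * y^5 + 3072 * q^2 * k^2 * y^6
     + 50496 * q^2 * k^2 * x - 353632 * q^2 * k^2 * x * y + 677184 * q^2 * k^2 * x * y^2
     - 516224 * q^2 * k^2 * x * y^3 + 153344 * q^2 * k^2 * x * y^4 - 10240 * q^2 * k^2 * x * y^5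
     - 2064 * q^2 * k^2 * x^2 - 8800 * q^2 * k^2 * x^2 * y + 14656 * q^2 * k^2 * x^2 * y^2
     - 5248 * q^2 * k^2 * x^2 * y^3 - 4128 * q^2 * k^2 * x^3 + 15808 * q^2 * k^2 * x^3 * y
     - 12160 * q^2 * k^2 * x^3 * y^2 + 2304 * q^2 * k^2 * x^3 * y^3 + 17112 * q^2 * k^3
     - 102464 * q^2 * k^3 * y + 263264 * q^2 * k^3 * y^2 - 256384 * q^2 * k^3 * y^3
     + 83968 * q^2 * k^3 * y^4 - 2048 * q^2 * k^3 * y^5 - 42336 * q^2 * k^3 * x
     + 231936 * q^2 * k^3 * x * y - 363136 * q^2 * k^3 * x * y^2 + 214528 * q^2 * k^3 * x * y^3
     - 41984 * q^2 * k^3 * x * y^4 + 3744 * q^2 * k^3 * x^2 - 10368 * q^2 * k^3 * x^2 * y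
     + 5248 * q^2 * k^3 * x^2 * y^2 + 9696 * q^2 * k^4 - 44480 * q^2 * k^4 * y
     + 34176 * q^2 * k^4 * y^2 + 1792 * q^2 * k^4 * y^3 - 5120 * q^2 * k^4 * y^4
     + 10560 * q^2 * k^4 * x - 40448 * q^2 * k^4 * x * y + 48384 * q^2 * k^4 * x * y^2
     - 17408 * q^2 * k^4 * x * y^3 - 6432 * q^2 * k^5 + 19072 * q^2 * k^5 * y
     - 16000 * q^2 * k^5 * y^2 + 4096 * q^2 * k^5 * y^3 - 8091 * q^3 + 47436 * q^3 * y
     - 82820 * q^3 * y^2 + 49824 * q^3 * y^3 - 2768 * q^3 * y^4 - 4928 * q^3 * y^5 + 576 * q^3 * y^6
     + 7896 * q^3 * x - 45680 * q^3 * x * y + 74176 * q^3 * x * y^2 - 48000 * q^3 * x * y^3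
     + 12160 * q^3 * x * y^4 - 768 * q^3 * x * y^5 + 37758 * q^3 * k - 215324 * q^3 * k * y
     + 403260 * q^3 * k * y^2 - 267104 * q^3 * k * y^3 + 41072 * q^3 * k * y^4
     + 11136 * q^3 * k * y^5 - 1152 * q^3 * k * y^6 - 19920 * q^3 * k * x + 153704 * q^3 * k * x * y
     - 297616 * q^3 * k * x * y^2 + 205024 * q^3 * k * x * y^3 - 49088 * q^3 * k * x * y^4
     + 2048 * q^3 * k * x * y^5 - 34116 * q^3 * k * x^2 + 76960 * q^3 * k * x^2 * y
     - 49728 * q^3 * k * x^2 * y^2 + 8192 * q^3 * k * x^2 * y^3 + 576 * q^3 * k * x^2 * y^4
     + 9648 * q^3 * k * x^3 - 17376 * q^3 * k * x^3 * y + 9792 * q^3 * k * x^3 * y^2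
     - 1664 * q^3 * k * x^3 * y^3 + 816 * q^3 * k * x^4 - 1216 * q^3 * k * x^4 * y
     + 448 * q^3 * k * x^4 * y^2 - 67392 * q^3 * k^2 + 302928 * q^3 * k^2 * y
     - 478336 * q^3 * k^2 * y^2 + 280448 * q^3 * k^2 * y^3 - 44288 * q^3 * k^2 * y^4
     - 4352 * q^3 * k^2 * y^5 + 89952 * q^3 * k^2 * x - 321328 * q^3 * k^2 * x * y
     + 391872 * q^3 * k^2 * x * y^2 - 185792 * q^3 * k^2 * x * y^3 + 27136 * q^3 * k^2 * x * y^4
     + 10368 * q^3 * k^2 * x^2 - 30528 * q^3 * k^2 * x^2 * y + 22272 * q^3 * k^2 * x^2 * y^2
     - 4352 * q^3 * k^2 * x^2 * y^3 - 5376 * q^3 * k^2 * x^3 + 8768 * q^3 * k^2 * x^3 * y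
     - 3840 * q^3 * k^2 * x^3 * y^2 + 256 * q^3 * k^2 * x^3 * y^3 + 8868 * q^3 * k^3
     - 56720 * q^3 * k^3 * y + 111632 * q^3 * k^3 * y^2 - 66432 * q^3 * k^3 * y^3
     + 9728 * q^3 * k^3 * y^4 - 55920 * q^3 * k^3 * x + 153920 * q^3 * k^3 * x * y
     - 133056 * q^3 * k^3 * x * y^2 + 36864 * q^3 * k^3 * x * y^3 + 2832 * q^3 * k^3 * x^2
     - 2752 * q^3 * k^3 * x^2 * y + 576 * q^3 * k^3 * x^2 * y^2 + 19632 * q^3 * k^4
     - 40832 * q^3 * k^4 * y + 21184 * q^3 * k^4 * y^2 - 1792 * q^3 * k^4 * y^3
     + 6144 * q^3 * k^4 * x - 12544 * q^3 * k^4 * x * y + 5632 * q^3 * k^4 * x * y^2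
     - 3744 * q^3 * k^5 + 6144 * q^3 * k^5 * y - 2432 * q^3 * k^5 * y^2 - 9054 * q^4
     + 31962 * q^4 * y - 34492 * q^4 * y^2 + 7632 * q^4 * y^3 + 5056 * q^4 * y^4 - 1760 * q^4 * y^5
     + 64 * q^4 * y^6 + 11010 * q^4 * x - 35252 * q^4 * x * y + 37904 * q^4 * x * y^2
     - 16416 * q^4 * x * y^3 + 2464 * q^4 * x * y^4 - 64 * q^4 * x * y^5 + 28434 * q^4 * k
     - 124772 * q^4 * k * y + 161804 * q^4 * k * y^2 - 61296 * q^4 * k * y^3 - 3728 * q^4 * k * y^4
     + 2688 * q^4 * k * y^5 - 15288 * q^4 * k * x + 83752 * q^4 * k * x * y
     - 114368 * q^4 * k * x * y^2 + 53152 * q^4 * k * x * y^3 - 6400 * q^4 * k * x * y^4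
     - 22020 * q^4 * k * x^2 + 37552 * q^4 * k * x^2 * y - 17984 * q^4 * k * x^2 * y^2
     + 1728 * q^4 * k * x^2 * y^3 + 64 * q^4 * k * x^2 * y^4 + 2016 * q^4 * k * x^3
     - 3360 * q^4 * k * x^3 * y + 1536 * q^4 * k * x^3 * y^2 - 128 * q^4 * k * x^3 * y^3
     + 624 * q^4 * k * x^4 - 512 * q^4 * k * x^4 * y + 64 * q^4 * k * x^4 * y^2 - 39288 * q^4 * k^2
     + 128288 * q^4 * k^2 * y - 137856 * q^4 * k^2 * y^2 + 48256 * q^4 * k^2 * y^3
     - 1152 * q^4 * k^2 * y^4 + 51840 * q^4 * k^2 * x - 121584 * q^4 * k^2 * x * y
     + 91904 * q^4 * k^2 * x * y^2 - 22592 * q^4 * k^2 * x * y^3 + 8592 * q^4 * k^2 * x^2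
     - 14368 * q^4 * k^2 * x^2 * y + 6336 * q^4 * k^2 * x^2 * y^2 - 384 * q^4 * k^2 * x^2 * y^3
     - 1824 * q^4 * k^2 * x^3 + 1792 * q^4 * k^2 * x^3 * y - 384 * q^4 * k^2 * x^3 * y^2
     - 4956 * q^4 * k^3 - 2240 * q^4 * k^3 * y + 12144 * q^4 * k^3 * y^2 - 5632 * q^4 * k^3 * y^3
     - 21504 * q^4 * k^3 * x + 34112 * q^4 * k^3 * x * y - 13184 * q^4 * k^3 * x * y^2
     + 816 * q^4 * k^3 * x^2 - 640 * q^4 * k^3 * x^2 * y + 64 * q^4 * k^3 * x^2 * y^2
     + 8880 * q^4 * k^4 - 11392 * q^4 * k^4 * y + 3648 * q^4 * k^4 * y^2 + 768 * q^4 * k^4 * x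
     - 512 * q^4 * k^4 * x * y - 576 * q^4 * k^5 + 384 * q^4 * k^5 * y - 4572 * q^5 + 10692 * q^5 * y
     - 5792 * q^5 * y^2 - 1888 * q^5 * y^3 + 1856 * q^5 * y^4 - 192 * q^5 * y^5 + 6204 * q^5 * x
     - 13568 * q^5 * x * y + 10080 * q^5 * x * y^2 - 2816 * q^5 * x * y^3 + 192 * q^5 * x * y^4
     + 9612 * q^5 * k - 35160 * q^5 * k * y + 29872 * q^5 * k * y^2 - 4592 * q^5 * k * y^3
     - 1696 * q^5 * k * y^4 - 6552 * q^5 * k * x + 22896 * q^5 * k * x * y
     - 20560 * q^5 * k * x * y^2 + 5568 * q^5 * k * x * y^3 - 64 * q^5 * k * x * y^4
     - 5664 * q^5 * k * x^2 + 7760 * q^5 * k * x^2 * y - 2752 * q^5 * k * x^2 * y^2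
     + 64 * q^5 * k * x^2 * y^3 - 336 * q^5 * k * x^3 + 128 * q^5 * k * x^3 * y
     + 64 * q^5 * k * x^3 * y^2 + 96 * q^5 * k * x^4 - 64 * q^5 * k * x^4 * y - 8184 * q^5 * k^2
     + 22448 * q^5 * k^2 * y - 16032 * q^5 * k^2 * y^2 + 3136 * q^5 * k^2 * y^3
     + 12192 * q^5 * k^2 * x - 17728 * q^5 * k^2 * x * y + 6208 * q^5 * k^2 * x * y^2
     + 128 * q^5 * k^2 * x * y^3 + 2304 * q^5 * k^2 * x^2 - 2304 * q^5 * k^2 * x^2 * y
     + 512 * q^5 * k^2 * x^2 * y^2 - 192 * q^5 * k^2 * x^3 + 128 * q^5 * k^2 * x^3 * y
     - 3936 * q^5 * k^3 + 3248 * q^5 * k^3 * y - 416 * q^5 * k^3 * y^2 - 2832 * q^5 * k^3 * x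
     + 1984 * q^5 * k^3 * x * y - 64 * q^5 * k^3 * x * y^2 + 96 * q^5 * k^3 * x^2
     - 64 * q^5 * k^3 * x^2 * y + 1248 * q^5 * k^4 - 832 * q^5 * k^4 * y - 1080 * q^6
     + 1752 * q^6 * y - 16 * q^6 * y^2 - 736 * q^6 * y^3 + 192 * q^6 * y^4 + 1560 * q^6 * x
     - 2576 * q^6 * x * y + 1312 * q^6 * x * y^2 - 192 * q^6 * x * y^3 + 1368 * q^6 * k
     - 4656 * q^6 * k * y + 2448 * q^6 * k * y^2 + 32 * q^6 * k * y^3 - 1344 * q^6 * k * x
     + 2720 * q^6 * k * x * y - 1312 * q^6 * k * x * y^2 + 64 * q^6 * k * x * y^3
     - 528 * q^6 * k * x^2 + 544 * q^6 * k * x^2 * y - 128 * q^6 * k * x^2 * y^2 - 96 * q^6 * k * x^3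
     + 64 * q^6 * k * x^3 * y - 96 * q^6 * k^2 + 1024 * q^6 * k^2 * y - 640 * q^6 * k^2 * y^2
     + 960 * q^6 * k^2 * x - 448 * q^6 * k^2 * x * y - 128 * q^6 * k^2 * x * y^2
     + 192 * q^6 * k^2 * x^2 - 128 * q^6 * k^2 * x^2 * y - 624 * q^6 * k^3 + 416 * q^6 * k^3 * y
     - 96 * q^6 * k^3 * x + 64 * q^6 * k^3 * x * y - 96 * q^7 + 112 * q^7 * y + 64 * q^7 * y^2
     - 64 * q^7 * y^3 + 144 * q^7 * x - 192 * q^7 * x * y + 64 * q^7 * x * y^2 + 48 * q^7 * k
     - 224 * q^7 * k * y + 128 * q^7 * k * y^2 - 96 * q^7 * k * x + 64 * q^7 * k * x * y
     + 96 * q^7 * k^2 - 64 * q^7 * k^2 * y"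

definition cert_poly2 :: "int \<Rightarrow> int \<Rightarrow> int \<Rightarrow> int \<Rightarrow> int" where
  "cert_poly2 q k x y =
     8424 - 53136 * y + 127872 * y^2 - 149376 * y^3 + 90240 * y^4 - 26880 * y^5 + 3072 * y^6
     - 6480 * x + 38880 * x * y - 86400 * x * y^2 + 88320 * x * y^3 - 42240 * x * y^4
     + 7680 * x * y^5 - 49248 * k + 275904 * k * y - 596544 * k * y^2 + 640256 * k * y^3
     - 361984 * k * y^4 + 102400 * k * y^5 - 11264 * k * y^6 + 38880 * k * x - 208512 * k * x * y
     + 420864 * k * x * y^2 - 402944 * k * x * y^3 + 184832 * k * x * y^4 - 32768 * k * x * y^5
     + 105120 * k^2 - 524352 * k^2 * y + 994432 * k^2 * y^2 - 940288 * k^2 * y^3 + 473088 * k^2 * y^4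
     - 120832 * k^2 * y^5 + 12288 * k^2 * y^6 - 83520 * k^2 * x + 409728 * k^2 * x * y
     - 752896 * k^2 * x * y^2 + 667136 * k^2 * x * y^3 - 288768 * k^2 * x * y^4
     + 49152 * k^2 * x * y^5 - 100800 * k^3 + 454656 * k^3 * y - 748288 * k^3 * y^2
     + 593920 * k^3 * y^3 - 242688 * k^3 * y^4 + 49152 * k^3 * y^5 - 4096 * k^3 * y^6
     + 74880 * k^3 * x - 348672 * k^3 * x * y + 600064 * k^3 * x * y^2 - 497664 * k^3 * x * y^3
     + 202752 * k^3 * x * y^4 - 32768 * k^3 * x * y^5 + 43776 * k^4 - 182784 * k^4 * y
     + 263680 * k^4 * y^2 - 168960 * k^4 * y^3 + 47104 * k^4 * y^4 - 4096 * k^4 * y^5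
     - 23040 * k^4 * x + 104448 * k^4 * x * y - 173056 * k^4 * x * y^2 + 137216 * k^4 * x * y^3
     - 53248 * k^4 * x * y^4 + 8192 * k^4 * x * y^5 - 6912 * k^5 + 27648 * k^5 * y
     - 36864 * k^5 * y^2 + 20480 * k^5 * y^3 - 4096 * k^5 * y^4 + 51030 * q - 248652 * q * y
     + 450624 * q * y^2 - 391840 * q * y^3 + 169952 * q * y^4 - 32960 * q * y^5 + 1792 * q * y^6
     - 38556 * q * x + 176616 * q * x * y - 291360 * q * x * y^2 + 220864 * q * x * y^3
     - 77248 * q * x * y^4 + 9856 * q * x * y^5 - 257400 * q * k + 1122576 * q * k * y
     - 1862064 * q * k * y^2 + 1502144 * q * k * y^3 - 605568 * q * k * y^4 + 106496 * q * k * y^5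
     - 4352 * q * k * y^6 + 198216 * q * k * x - 821472 * q * k * x * y + 1264896 * q * k * x * y^2
     - 911488 * q * k * x * y^3 + 305024 * q * k * x * y^4 - 36864 * q * k * x * y^5
     + 468120 * q * k^2 - 1778288 * q * k^2 * y + 2584800 * q * k^2 * y^2 - 1821888 * q * k^2 * y^3
     + 628480 * q * k^2 * y^4 - 85504 * q * k^2 * y^5 - 357744 * q * k^2 * x
     + 1336928 * q * k^2 * x * y - 1899840 * q * k^2 * x * y^2 + 1276032 * q * k^2 * x * y^3
     - 396288 * q * k^2 * x * y^4 + 43008 * q * k^2 * x * y^5 - 376464 * q * k^3
     + 1231232 * q * k^3 * y - 1526720 * q * k^3 * y^2 + 897024 * q * k^3 * y^3
     - 245248 * q * k^3 * y^4 + 20480 * q * k^3 * y^5 + 2048 * q * k^3 * y^6 + 263136 * q * k^3 * x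
     - 886784 * q * k^3 * x * y + 1147776 * q * k^3 * x * y^2 - 699392 * q * k^3 * x * y^3
     + 191488 * q * k^3 * x * y^4 - 16384 * q * k^3 * x * y^5 + 130368 * q * k^4
     - 356096 * q * k^4 * y + 359168 * q * k^4 * y^2 - 165888 * q * k^4 * y^3 + 36864 * q * k^4 * y^4
     - 4096 * q * k^4 * y^5 - 64128 * q * k^4 * x + 190208 * q * k^4 * x * y
     - 213504 * q * k^4 * x * y^2 + 107520 * q * k^4 * x * y^3 - 20480 * q * k^4 * x * y^4
     - 14400 * q * k^5 + 27648 * q * k^5 * y - 13568 * q * k^5 * y^2 - 2048 * q * k^5 * y^3
     + 2048 * q * k^5 * y^4 + 116811 * q^2 - 431130 * q^2 * y + 591496 * q^2 * y^2
     - 377392 * q^2 * y^3 + 108976 * q^2 * y^4 - 9632 * q^2 * y^5 - 512 * q^2 * y^6 - 85842 * q^2 * x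
     + 295068 * q^2 * x * y - 371056 * q^2 * x * y^2 + 213280 * q^2 * x * y^3 - 54560 * q^2 * x * y^4
     + 4544 * q^2 * x * y^5 - 505920 * q^2 * k + 1706408 * q^2 * k * y - 2168360 * q^2 * k * y^2
     + 1276320 * q^2 * k * y^3 - 327680 * q^2 * k * y^4 + 19200 * q^2 * k * y^5
     + 2688 * q^2 * k * y^6 + 373908 * q^2 * k * x - 1197776 * q^2 * k * x * y
     + 1433408 * q^2 * k * x * y^2 - 786624 * q^2 * k * x * y^3 + 189888 * q^2 * k * x * y^4
     - 14336 * q^2 * k * x * y^5 + 745884 * q^2 * k^2 - 2203608 * q^2 * k^2 * y
     + 2457712 * q^2 * k^2 * y^2 - 1248736 * q^2 * k^2 * y^3 + 255360 * q^2 * k^2 * y^4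
     - 1792 * q^2 * k^2 * y^5 - 3072 * q^2 * k^2 * y^6 - 536568 * q^2 * k^2 * x
     + 1576816 * q^2 * k^2 * x * y - 1738656 * q^2 * k^2 * x * y^2 + 866880 * q^2 * k^2 * x * y^3
     - 181760 * q^2 * k^2 * x * y^4 + 10240 * q^2 * k^2 * x * y^5 - 448584 * q^2 * k^3
     + 1131904 * q^2 * k^3 * y - 1069024 * q^2 * k^3 * y^2 + 457728 * q^2 * k^3 * y^3
     - 79872 * q^2 * k^3 * y^4 + 2048 * q^2 * k^3 * y^5 + 284592 * q^2 * k^3 * x
     - 749312 * q^2 * k^3 * x * y + 722496 * q^2 * k^3 * x * y^2 - 295936 * q^2 * k^3 * x * y^3
     + 41984 * q^2 * k^3 * x * y^4 + 91872 * q^2 * k^4 - 179520 * q^2 * k^4 * y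
     + 122240 * q^2 * k^4 * y^2 - 36608 * q^2 * k^4 * y^3 + 5120 * q^2 * k^4 * y^4
     - 40704 * q^2 * k^4 * x + 90880 * q^2 * k^4 * x * y - 68608 * q^2 * k^4 * x * y^2
     + 17408 * q^2 * k^4 * x * y^3 + 288 * q^2 * k^5 - 7680 * q^2 * k^5 * y + 11136 * q^2 * k^5 * y^2
     - 4096 * q^2 * k^5 * y^3 + 129753 * q^3 - 367080 * q^3 * y + 377564 * q^3 * y^2
     - 165312 * q^3 * y^3 + 22896 * q^3 * y^4 + 2432 * q^3 * y^5 - 448 * q^3 * y^6 - 91368 * q^3 * x
     + 243000 * q^3 * x * y - 237888 * q^3 * x * y^2 + 103488 * q^3 * x * y^3 - 18560 * q^3 * x * y^4
     + 896 * q^3 * x * y^5 - 484098 * q^3 * k + 1276816 * q^3 * k * y - 1220984 * q^3 * k * y^2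
     + 483552 * q^3 * k * y^3 - 50208 * q^3 * k * y^4 - 9856 * q^3 * k * y^5 + 1152 * q^3 * k * y^6
     + 336144 * q^3 * k * x - 859376 * q^3 * k * x * y + 806176 * q^3 * k * x * y^2
     - 330560 * q^3 * k * x * y^3 + 53376 * q^3 * k * x * y^4 - 2048 * q^3 * k * x * y^5
     + 554424 * q^3 * k^2 - 1302256 * q^3 * k^2 * y + 1102432 * q^3 * k^2 * y^2
     - 380544 * q^3 * k^2 * y^3 + 33536 * q^3 * k^2 * y^4 + 4352 * q^3 * k^2 * y^5
     - 368352 * q^3 * k^2 * x + 867936 * q^3 * k^2 * x * y - 726528 * q^3 * k^2 * x * y^2
     + 248448 * q^3 * k^2 * x * y^3 - 27136 * q^3 * k^2 * x * y^4 - 216048 * q^3 * k^3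
     + 432608 * q^3 * k^3 * y - 311808 * q^3 * k^3 * y^2 + 94208 * q^3 * k^3 * y^3
     - 9728 * q^3 * k^3 * y^4 + 127872 * q^3 * k^3 * x - 259392 * q^3 * k^3 * x * y
     + 171392 * q^3 * k^3 * x * y^2 - 36864 * q^3 * k^3 * x * y^3 + 9552 * q^3 * k^4
     - 4160 * q^3 * k^4 * y - 4160 * q^3 * k^4 * y^2 + 1792 * q^3 * k^4 * y^3 - 9600 * q^3 * k^4 * x
     + 14848 * q^3 * k^4 * x * y - 5632 * q^3 * k^4 * x * y^2 + 3168 * q^3 * k^5
     - 5760 * q^3 * k^5 * y + 2432 * q^3 * k^5 * y^2 + 77310 * q^4 - 168294 * q^4 * y
     + 123868 * q^4 * y^2 - 29296 * q^4 * y^3 - 3136 * q^4 * y^4 + 1568 * q^4 * y^5 - 64 * q^4 * y^6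
     - 51318 * q^4 * x + 109428 * q^4 * x * y - 83888 * q^4 * x * y^2 + 26912 * q^4 * x * y^3
     - 3040 * q^4 * x * y^4 + 64 * q^4 * x * y^5 - 247746 * q^4 * k + 513152 * q^4 * k * y
     - 354176 * q^4 * k * y^2 + 76320 * q^4 * k * y^3 + 7456 * q^4 * k * y^4 - 2688 * q^4 * k * y^5
     + 159516 * q^4 * k * x - 331824 * q^4 * k * x * y + 239744 * q^4 * k * x * y^2
     - 68160 * q^4 * k * x * y^3 + 5696 * q^4 * k * x * y^4 + 205740 * q^4 * k^2
     - 389448 * q^4 * k^2 * y + 247728 * q^4 * k^2 * y^2 - 54752 * q^4 * k^2 * y^3
     + 1152 * q^4 * k^2 * y^4 - 126216 * q^4 * k^2 * x + 231888 * q^4 * k^2 * x * y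
     - 135648 * q^4 * k^2 * x * y^2 + 24768 * q^4 * k^2 * x * y^3 - 35880 * q^4 * k^3
     + 56128 * q^4 * k^3 * y - 29920 * q^4 * k^3 * y^2 + 5632 * q^4 * k^3 * y^3
     + 25296 * q^4 * k^3 * x - 35584 * q^4 * k^3 * x * y + 12480 * q^4 * k^3 * x * y^2
     - 6480 * q^4 * k^4 + 9792 * q^4 * k^4 * y - 3648 * q^4 * k^4 * y^2 - 768 * q^4 * k^4 * x
     + 512 * q^4 * k^4 * x * y + 576 * q^4 * k^5 - 384 * q^4 * k^5 * y + 25236 * q^5
     - 41748 * q^5 * y + 19136 * q^5 * y^2 + 672 * q^5 * y^3 - 1856 * q^5 * y^4 + 192 * q^5 * y^5
     - 15516 * q^5 * x + 27456 * q^5 * x * y - 16352 * q^5 * x * y^2 + 3584 * q^5 * x * y^3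
     - 192 * q^5 * x * y^4 - 68676 * q^5 * k + 111352 * q^5 * k * y - 52016 * q^5 * k * y^2
     + 2848 * q^5 * k * y^3 + 1792 * q^5 * k * y^4 + 41064 * q^5 * k * x - 68272 * q^5 * k * x * y
     + 35424 * q^5 * k * x * y^2 - 5440 * q^5 * k * x * y^3 + 35736 * q^5 * k^2
     - 54976 * q^5 * k^2 * y + 25760 * q^5 * k^2 * y^2 - 3328 * q^5 * k^2 * y^3
     - 20976 * q^5 * k^2 * x + 27136 * q^5 * k^2 * x * y - 8768 * q^5 * k^2 * x * y^2
     + 1968 * q^5 * k^3 - 2080 * q^5 * k^3 * y + 512 * q^5 * k^3 * y^2 + 1824 * q^5 * k^3 * x
     - 1216 * q^5 * k^3 * x * y - 1248 * q^5 * k^4 + 832 * q^5 * k^4 * y + 4248 * q^6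
     - 5160 * q^6 * y + 784 * q^6 * y^2 + 800 * q^6 * y^3 - 192 * q^6 * y^4 - 2376 * q^6 * x
     + 3600 * q^6 * x * y - 1632 * q^6 * x * y^2 + 192 * q^6 * x * y^3 - 9624 * q^6 * k
     + 12224 * q^6 * k * y - 3680 * q^6 * k * y^2 - 128 * q^6 * k * y^3 + 5424 * q^6 * k * x
     - 6592 * q^6 * k * x * y + 1984 * q^6 * k * x * y^2 + 1872 * q^6 * k^2 - 2496 * q^6 * k^2 * y
     + 832 * q^6 * k^2 * y^2 - 1344 * q^6 * k^2 * x + 896 * q^6 * k^2 * x * y + 768 * q^6 * k^3
     - 512 * q^6 * k^3 * y + 288 * q^7 - 240 * q^7 * y - 64 * q^7 * y^2 + 64 * q^7 * y^3
     - 144 * q^7 * x + 192 * q^7 * x * y - 64 * q^7 * x * y^2 - 528 * q^7 * k + 544 * q^7 * k * y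
     - 128 * q^7 * k * y^2 + 288 * q^7 * k * x - 192 * q^7 * k * x * y - 96 * q^7 * k^2
     + 64 * q^7 * k^2 * y"

definition cert_den :: "int \<Rightarrow> int \<Rightarrow> int" where
  "cert_den q k = k * (q + 2) * (q + 3) * (q + 4) * (k - q - 2) * (2 * k - 2 * q - 3)"

definition H_rec_numerator :: "int \<Rightarrow> int \<Rightarrow> int \<Rightarrow> int \<Rightarrow> int" where
  "H_rec_numerator q k l1 l2 =
     8 * q\<^sup>2 * k * (q + 2) * (q + 3) * (q + 4) * H_ratio0 q k l1 l2
     + 4 * (4 * k * q - 4 * q\<^sup>2 + 2 * k - 7 * q - 4) * k * (q + 2) * (q + 3) * (q + 4) * H_ratio1 q k l1 l2
     + 4 * cert_den q k * H_ratio2 q k l1 l2"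

definition G_diff_numerator :: "int \<Rightarrow> int \<Rightarrow> int \<Rightarrow> int \<Rightarrow> int" where
  "G_diff_numerator q k l1 l2 =
     cert_ratio_succ q k l1 l2 * cert_poly1 q k (l1 + 1) l2 - cert_ratio q k l1 l2 * cert_poly1 q k l1 l2
     + (cert_ratio_succ q k l2 l1 * cert_poly2 q k l1 (l2 + 1) - cert_ratio q k l2 l1 * cert_poly2 q k l1 l2)"

lemma certificate_identity: "H_rec_numerator q k l1 l2 = G_diff_numerator q k l1 l2"
  unfolding H_rec_numerator_def G_diff_numerator_def H_ratio0_def H_ratio1_def H_ratio2_def cert_den_def
    cert_ratio_def cert_ratio_succ_def cert_poly1_def cert_poly2_def
  by algebra

definition rec_coeff0 :: "int \<Rightarrow> int \<Rightarrow> real" where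
  "rec_coeff0 q k = (of_int q)^2 / (8 * (2 * of_int k - 2 * of_int q - 3) * (of_int k - of_int q - 2))"

definition rec_coeff1 :: "int \<Rightarrow> int \<Rightarrow> real" where
  "rec_coeff1 q k = (4 * of_int k * of_int q - 4 * (of_int q)^2 + 2 * of_int k - 7 * of_int q - 4)
     / (4 * (2 * of_int k - 2 * of_int q - 3) * (of_int k - of_int q - 2))"

definition H_rec :: "int \<Rightarrow> int \<Rightarrow> int \<Rightarrow> int \<Rightarrow> real" where
  "H_rec q k l1 l2 = rec_coeff0 q k * H q l1 l2 k + rec_coeff1 q k * H (q + 1) l1 l2 k + H (q + 2) l1 l2 k"

lemma rec_coeffs_mult_denominator:
  fixes q k :: int
  assumes "k \<noteq> q + 2"
  defines "d \<equiv> ((2 * of_int k - 2 * of_int q - 3) * (of_int k - of_int q - 2) :: real)"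
  shows "8 * d * rec_coeff0 q k = (of_int q)^2"
    and "4 * d * rec_coeff1 q k = 4 * of_int k * of_int q - 4 * (of_int q)^2 + 2 * of_int k - 7 * of_int q - 4"
proof -
  have "2 * k - 2 * q - 3 \<noteq> 0" by presburger
  then have "d \<noteq> 0" using assms unfolding d_def by simp
  then show "8 * d * rec_coeff0 q k = (of_int q)^2"
    and "4 * d * rec_coeff1 q k = 4 * of_int k * of_int q - 4 * (of_int q)^2 + 2 * of_int k - 7 * of_int q - 4"
    unfolding rec_coeff0_def rec_coeff1_def d_def by (simp_all add: field_simps)
qed

lemma H_rec_eq_H_base:
  "H_rec q k l1 l2 = (rec_coeff0 q k * of_int (H_ratio0 q k l1 l2) / 16
     + rec_coeff1 q k * of_int (H_ratio1 q k l1 l2) / 64 + of_int (H_ratio2 q k l1 l2) / 256) * H_base q k l1 l2"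
  unfolding H_rec_def H_eq_H_base[of q] H_succ_eq_H_base H_succ2_eq_H_base by (simp add: algebra_simps)

definition G1 :: "int \<Rightarrow> int \<Rightarrow> int \<Rightarrow> int \<Rightarrow> real" where
  "G1 q k l1 l2 = of_int (cert_poly1 q k l1 l2) / (512 * of_int (cert_den q k)) * cert_term q k l1 l2"

definition G2 :: "int \<Rightarrow> int \<Rightarrow> int \<Rightarrow> int \<Rightarrow> real" where
  "G2 q k l1 l2 = of_int (cert_poly2 q k l1 l2) / (512 * of_int (cert_den q k)) * cert_term q k l2 l1"

lemma cert_den_factor:
  "of_int (cert_den q k) = (of_int (k * (q + 2) * (q + 3) * (q + 4)) :: real)
     * ((2 * of_int k - 2 * of_int q - 3) * (of_int k - of_int q - 2))"
  unfolding cert_den_def by (simp add: algebra_simps)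

lemma H_rec_clear_denominator:
  assumes "k \<noteq> q + 2"
  shows "1024 * of_int (cert_den q k) * H_rec q k l1 l2 = of_int (H_rec_numerator q k l1 l2) * H_base q k l1 l2"
proof -
  let ?kq = "of_int (k * (q + 2) * (q + 3) * (q + 4)) :: real"
  let ?d = "(2 * of_int k - 2 * of_int q - 3) * (of_int k - of_int q - 2) :: real"
  have "1024 * of_int (cert_den q k) * H_rec q k l1 l2
      = (8 * ?kq * (8 * ?d * rec_coeff0 q k) * of_int (H_ratio0 q k l1 l2)
         + 4 * ?kq * (4 * ?d * rec_coeff1 q k) * of_int (H_ratio1 q k l1 l2)
         + 4 * of_int (cert_den q k) * of_int (H_ratio2 q k l1 l2)) * H_base q k l1 l2"
    unfolding H_rec_eq_H_base cert_den_factor by (simp add: algebra_simps)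
  also have "\<dots> = of_int (H_rec_numerator q k l1 l2) * H_base q k l1 l2"
    unfolding rec_coeffs_mult_denominator[OF assms] H_rec_numerator_def by (simp add: algebra_simps)
  finally show ?thesis .
qed

lemma G_diff_clear_denominator:
  assumes "cert_den q k \<noteq> 0"
  shows "1024 * of_int (cert_den q k) * ((G1 q k (l1 + 1) l2 - G1 q k l1 l2) + (G2 q k l1 (l2 + 1) - G2 q k l1 l2))
    = of_int (G_diff_numerator q k l1 l2) * H_base q k l1 l2"
  unfolding G1_def G2_def G_diff_numerator_def cert_term_succ_eq_H_base[of q k l1 l2]
    cert_term_eq_H_base[of q k l1 l2] cert_term_succ_eq_H_base[of q k l2 l1] cert_term_eq_H_base[of q k l2 l1]
    H_base_swap[of q k l2 l1]
  using assms by (simp add: field_simps)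

lemma H_rec_eq_telescoping:
  assumes "0 \<le> q" and "k \<noteq> 0" and "k \<noteq> q + 2"
  shows "H_rec q k l1 l2 = (G1 q k (l1 + 1) l2 - G1 q k l1 l2) + (G2 q k l1 (l2 + 1) - G2 q k l1 l2)"
proof -
  have "2 * k - 2 * q - 3 \<noteq> 0" by presburger
  moreover have "k - q - 2 \<noteq> 0" "q + 2 \<noteq> 0" "q + 3 \<noteq> 0" "q + 4 \<noteq> 0" using assms by auto
  ultimately have den: "cert_den q k \<noteq> 0" using assms(2) unfolding cert_den_def mult_eq_0_iff by blast
  have "1024 * of_int (cert_den q k) * H_rec q k l1 l2
      = 1024 * of_int (cert_den q k) * ((G1 q k (l1 + 1) l2 - G1 q k l1 l2) + (G2 q k l1 (l2 + 1) - G2 q k l1 l2))"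
    unfolding H_rec_clear_denominator[OF assms(3)] G_diff_clear_denominator[OF den] certificate_identity ..
  moreover have "1024 * of_int (cert_den q k) \<noteq> (0 :: real)" using den by simp
  ultimately show ?thesis by (rule mult_left_cancel[THEN iffD1, rotated])
qed

section \<open>The certificate for \<open>k = 0\<close>\<close>

definition diag_cert_poly :: "int \<Rightarrow> int \<Rightarrow> int" where
  "diag_cert_poly q m = 2 - 9 * m + 12 * m^2 - 4 * m^3 + q - 4 * q * m + 4 * q * m^2"

definition H_rec_diag_numerator :: "int \<Rightarrow> int \<Rightarrow> int" where
  "H_rec_diag_numerator q l =
     (2 * q\<^sup>2 * H_ratio0 q 0 l l + (- 4 * q\<^sup>2 - 7 * q - 4) * H_ratio1 q 0 l l
       + (2 * q + 3) * (q + 2) * H_ratio2 q 0 l l) * ((2 * q - 2 * l + 5) * (2 * q - 2 * l + 6))"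

definition G_diag_diff_numerator :: "int \<Rightarrow> int \<Rightarrow> int" where
  "G_diag_diff_numerator q l = diag_cert_poly q l * diag_ratio q l - diag_cert_poly q (l - 1) * diag_ratio_pred q l"

lemma diag_certificate_identity: "H_rec_diag_numerator q l = G_diag_diff_numerator q l"
  unfolding H_rec_diag_numerator_def G_diag_diff_numerator_def H_ratio0_def H_ratio1_def H_ratio2_def
    diag_cert_poly_def diag_ratio_def diag_ratio_pred_def
  by algebra

definition G_diag :: "int \<Rightarrow> int \<Rightarrow> int \<Rightarrow> real" where
  "G_diag q l1 l2 = (if l1 = l2 then of_int (diag_cert_poly q (l1 - 1)) / (4 * of_int ((2 * q + 3) * (q + 2)))
     * diag_cert_term q (l1 - 1) else 0)"

lemma H_off_diagonal: "l1 \<noteq> l2 \<Longrightarrow> H q l1 l2 0 = 0"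
  unfolding H_def by (cases "l1 < l2") (simp_all add: rfact_int_eq_0)

lemma H_rec_diag_clear_denominator:
  assumes "0 \<le> q"
  shows "256 * of_int ((2 * q + 3) * (q + 2)) * H_rec q 0 l l = of_int (H_rec_diag_numerator q l) * H_diag_base q l"
proof -
  let ?c = "of_int ((2 * q + 3) * (q + 2)) :: real"
  have coeffs: "8 * ?c * rec_coeff0 q 0 = (of_int q)^2" "4 * ?c * rec_coeff1 q 0 = - 4 * (of_int q)^2 - 7 * of_int q - 4"
    using rec_coeffs_mult_denominator[of 0 q] assms by (simp_all add: algebra_simps)
  have "256 * ?c * H_rec q 0 l l
      = (2 * (8 * ?c * rec_coeff0 q 0) * of_int (H_ratio0 q 0 l l)
         + (4 * ?c * rec_coeff1 q 0) * of_int (H_ratio1 q 0 l l) + ?c * of_int (H_ratio2 q 0 l l))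
        * H_base q 0 l l"
    unfolding H_rec_eq_H_base by (simp add: algebra_simps)
  also have "\<dots> = of_int (H_rec_diag_numerator q l) * H_diag_base q l"
    unfolding coeffs H_base_diag H_rec_diag_numerator_def by (simp add: algebra_simps)
  finally show ?thesis .
qed

lemma G_diag_diff_clear_denominator:
  assumes "0 \<le> q"
  shows "256 * of_int ((2 * q + 3) * (q + 2)) * (G_diag q (l + 1) (l + 1) - G_diag q l l)
    = of_int (G_diag_diff_numerator q l) * H_diag_base q l"
proof -
  define c :: real where "c = of_int ((2 * q + 3) * (q + 2))"
  have "c \<noteq> 0" using assms unfolding c_def by simp
  have G_diag_succ: "G_diag q (l + 1) (l + 1) = of_int (diag_cert_poly q l) / (4 * c) * diag_cert_term q l"
    and G_diag_self: "G_diag q l l = of_int (diag_cert_poly q (l - 1)) / (4 * c) * diag_cert_term q (l - 1)"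
    unfolding G_diag_def c_def by simp_all
  show ?thesis
    unfolding G_diag_succ G_diag_self G_diag_diff_numerator_def c_def[symmetric] diag_cert_term_eq_H_diag_base[of q l]
      diag_cert_term_pred_eq_H_diag_base[of q l]
    using \<open>c \<noteq> 0\<close> by (simp add: field_simps)
qed

lemma H_rec_diag_eq_telescoping:
  assumes "0 \<le> q"
  shows "H_rec q 0 l l = G_diag q (l + 1) (l + 1) - G_diag q l l"
proof -
  have "256 * of_int ((2 * q + 3) * (q + 2)) * H_rec q 0 l l
      = 256 * of_int ((2 * q + 3) * (q + 2)) * (G_diag q (l + 1) (l + 1) - G_diag q l l)"
    unfolding H_rec_diag_clear_denominator[OF assms] G_diag_diff_clear_denominator[OF assms]
      diag_certificate_identity ..
  moreover have "256 * of_int ((2 * q + 3) * (q + 2)) \<noteq> (0 :: real)" using assms by simp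
  ultimately show ?thesis by (rule mult_left_cancel[THEN iffD1, rotated])
qed

lemma H_rec_k0_eq_telescoping:
  assumes "0 \<le> q"
  shows "H_rec q 0 l1 l2 = G_diag q (l1 + 1) (l2 + 1) - G_diag q l1 l2"
proof (cases "l1 = l2")
  case True
  then show ?thesis using H_rec_diag_eq_telescoping[OF assms] by simp
next
  case False
  then show ?thesis by (simp add: H_rec_def G_diag_def H_off_diagonal)
qed

lemma finite_support_H: "finite {p. (\<lambda>(l1, l2). H q l1 l2 k) p \<noteq> 0}"
  by (rule finite_support_int_pair[where s\<^sub>0 = k and s\<^sub>1 = "2 * q - k" and d\<^sub>0 = "- k" and d\<^sub>1 = k])
     (auto simp: H_def dest!: rfact_int_nonzero_imp_nonneg)

lemma finite_support_G1: "finite {p. (\<lambda>(l1, l2). G1 q k l1 l2) p \<noteq> 0}"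
  by (rule finite_support_int_pair[where s\<^sub>0 = "k + 1" and s\<^sub>1 = "2 * q - k + 4" and d\<^sub>0 = "1 - k" and d\<^sub>1 = k])
     (auto simp: G1_def cert_term_def dest!: rfact_int_nonzero_imp_nonneg)

lemma finite_support_G2: "finite {p. (\<lambda>(l1, l2). G2 q k l1 l2) p \<noteq> 0}"
  by (rule finite_support_int_pair[where s\<^sub>0 = "k + 1" and s\<^sub>1 = "2 * q - k + 4" and d\<^sub>0 = "- k" and d\<^sub>1 = "k - 1"])
     (auto simp: G2_def cert_term_def dest!: rfact_int_nonzero_imp_nonneg)

lemma finite_support_G_diag: "finite {p. (\<lambda>(l1, l2). G_diag q l1 l2) p \<noteq> 0}"
  by (rule finite_support_int_pair[where s\<^sub>0 = 2 and s\<^sub>1 = "2 * q + 6" and d\<^sub>0 = 0 and d\<^sub>1 = 0])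
     (auto simp: G_diag_def diag_cert_term_def split: if_splits dest!: rfact_int_nonzero_imp_nonneg)

lemma infsum_H_rec:
  "(\<Sum>\<^sub>\<infinity>(l1, l2). H_rec q k l1 l2) = rec_coeff0 q k * S q k + rec_coeff1 q k * S (q + 1) k + S (q + 2) k"
proof -
  have summable: "(\<lambda>(l1, l2). H q' l1 l2 k) summable_on UNIV" for q'
    using finite_support_H by (rule summable_on_finite_support)
  have "(\<lambda>(l1, l2). H_rec q k l1 l2) = (\<lambda>p. rec_coeff0 q k * (\<lambda>(l1, l2). H q l1 l2 k) p
      + rec_coeff1 q k * (\<lambda>(l1, l2). H (q + 1) l1 l2 k) p + (\<lambda>(l1, l2). H (q + 2) l1 l2 k) p)"
    by (auto simp: H_rec_def)
  then show ?thesis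
    unfolding S_def by (simp only: infsum_linear_combination3[OF summable summable summable])
qed

lemma infsum_H_rec_eq_0:
  assumes "0 \<le> q" and "k \<noteq> q + 2"
  shows "(\<Sum>\<^sub>\<infinity>(l1, l2). H_rec q k l1 l2) = 0"
proof (cases "k = 0")
  case True
  let ?G = "\<lambda>(l1, l2). G_diag q l1 l2" and ?s = "\<lambda>(a, b). (a + 1, b + 1 :: int)"
  have "(\<Sum>\<^sub>\<infinity>(l1, l2). H_rec q k l1 l2) = (\<Sum>\<^sub>\<infinity>p. ?G (?s p) - ?G p)"
    using True by (intro infsum_cong) (auto simp: H_rec_k0_eq_telescoping[OF assms(1)])
  also have "\<dots> = 0"
    by (rule infsum_reindex_diff_eq_0(2)[OF finite_support_G_diag bij_shift_int_pair])
  finally show ?thesis .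
next
  case False
  show ?thesis
    by (rule infsum_telescoping_eq_0[OF finite_support_G1 bij_shift_int_pair[of 1 0, simplified]
          finite_support_G2 bij_shift_int_pair[of 0 1, simplified]])
       (auto simp: H_rec_eq_telescoping[OF assms(1) False assms(2)])
qed

theorem lemma7p5:
  fixes q k :: int
  assumes "q \<ge> 1" and "k \<ge> 0" and "k \<noteq> q + 2"
  shows "(of_int q)^2 / (8 * (2 * of_int k - 2 * of_int q - 3) * (of_int k - of_int q - 2)) * S q k
       + (4 * of_int k * of_int q - 4 * (of_int q)^2 + 2 * of_int k - 7 * of_int q - 4)
           / (4 * (2 * of_int k - 2 * of_int q - 3) * (of_int k - of_int q - 2)) * S (q + 1) k
       + S (q + 2) k = (0::real)"
proof -
  have "rec_coeff0 q k * S q k + rec_coeff1 q k * S (q + 1) k + S (q + 2) k = 0"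
    using infsum_H_rec_eq_0[of q k] assms unfolding infsum_H_rec by simp
  then show ?thesis unfolding rec_coeff0_def rec_coeff1_def .
qed

end
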